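(* Let $T=(V,E,F)$ be a triangulated surface and $\phi:|T|\to\mathbb C$ a geodesic homeomorphism whose induced PL metric is uniformly nondegenerate with constant $\epsilon>0$. There is a constant $C=C(\epsilon)>0$, depending only on $\epsilon$, such that: whenever $0<r_1<r_2$ and $V_1,V_2$ are nonempty subsets of $V$ with $\phi(V_1)\subseteq D_{r_1}$, $\phi(V_2)\subseteq\mathbb C\setminus D_{r_2}$, and $\phi(R_i)\subseteq D_{r_2}$ for every $i\in V_1$, one has $$\mathrm{VEL}(V_1,V_2)\ge C\Big(1-\big(\tfrac{r_1}{r_2}\big)^2\Big).$$ In particular, if $r_2\ge2r_1$ then $\mathrm{VEL}(V_1,V_2)\ge \tfrac34 C$.
   Context: A geodesic homeomorphism $\phi:|T|\to\mathbb C$ maps each edge to the straight segment between the images of its endpoints and $|T|$ homeomorphically onto $\mathbb C$; uniformly nondegenerate with constant $\epsilon$ means all inner angles of the image triangles are $\ge\epsilon$. $R_i$ is the union of the triangles containing $i$; $D_r=\{|z|<r\}$. For disjoint nonempty $V_1,V_2\subseteq V$, $\Gamma(V_1,V_2)$ is the set of finite paths in the graph $(V,E)$ joining a vertex of $V_1$ to a vertex of $V_2$. A vertex metric $\eta:V\to[0,\infty)$ is $\Gamma(V_1,V_2)$-admissible if $\sum_{v\in\gamma}\eta(v)\ge1$ for every $\gamma\in\Gamma(V_1,V_2)$ (sum over the vertices of $\gamma$). $\mathrm{Mod}(V_1,V_2)=\inf\{\sum_{v\in V}\eta(v)^2:\eta\text{ admissible}\}$ and $\mathrm{VEL}(V_1,V_2)=1/\mathrm{Mod}(V_1,V_2)$.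 *)

theory Defs
  imports "HOL-Analysis.Analysis" "HOL-Library.Extended_Nonnegative_Real"
begin

text \<open>A triangulation T = (V,E,F) with vertices labelled by natural numbers
  (any triangulation of the plane has countably many vertices).\<close>

definition triangulation_data :: "nat set \<Rightarrow> nat set set \<Rightarrow> nat set set \<Rightarrow> bool" where
  "triangulation_data V E F \<longleftrightarrow>
     (\<forall>f\<in>F. f \<subseteq> V \<and> card f = 3) \<and>
     V = \<Union>F \<and>
     E = {e. card e = 2 \<and> (\<exists>f\<in>F. e \<subseteq> f)}"

text \<open>The geodesic map determined by vertex positions p: each face f is mapped
  affinely onto the triangle convex hull (p ` f).\<close>

definition geo_triangle :: "(nat \<Rightarrow> complex) \<Rightarrow> nat set \<Rightarrow> complex set" where
  "geo_triangle p f = convex hull (p ` f)"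

text \<open>The geodesic (piecewise affine) extension of p is a homeomorphism |T| \<rightarrow> \<complex>:
  nondegenerate image triangles, triangles meet exactly in the images of common
  faces, they cover the plane, and the triangulation is locally finite.\<close>

definition geodesic_homeomorphism ::
    "nat set \<Rightarrow> nat set set \<Rightarrow> nat set set \<Rightarrow> (nat \<Rightarrow> complex) \<Rightarrow> bool" where
  "geodesic_homeomorphism V E F p \<longleftrightarrow>
     triangulation_data V E F \<and>
     inj_on p V \<and>
     (\<forall>f\<in>F. \<not> collinear (p ` f)) \<and>
     (\<forall>f\<in>F. \<forall>g\<in>F. f \<noteq> g \<longrightarrow>
        geo_triangle p f \<inter> geo_triangle p g = geo_triangle p (f \<inter> g)) \<and>
     (\<Union>f\<in>F. geo_triangle p f) = UNIV \<and>
     (\<forall>z. \<exists>e>0. finite {f\<in>F. geo_triangle p f \<inter> ball z e \<noteq> {}})"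

definition inner_angle :: "complex \<Rightarrow> complex \<Rightarrow> complex \<Rightarrow> real" where
  "inner_angle a b c = arccos (((b - a) \<bullet> (c - a)) / (norm (b - a) * norm (c - a)))"

definition uniformly_nondegenerate ::
    "nat set set \<Rightarrow> (nat \<Rightarrow> complex) \<Rightarrow> real \<Rightarrow> bool" where
  "uniformly_nondegenerate F p \<epsilon> \<longleftrightarrow>
     (\<forall>f\<in>F. \<forall>a\<in>f. \<forall>b\<in>f. \<forall>c\<in>f. a \<noteq> b \<and> a \<noteq> c \<and> b \<noteq> c \<longrightarrow>
        inner_angle (p a) (p b) (p c) \<ge> \<epsilon>)"

text \<open>R_i: union of the (image) triangles containing vertex i, i.e. phi(R_i).\<close>

definition star_image :: "nat set set \<Rightarrow> (nat \<Rightarrow> complex) \<Rightarrow> nat \<Rightarrow> complex set" where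
  "star_image F p i = (\<Union>f\<in>{f\<in>F. i \<in> f}. geo_triangle p f)"

definition graph_paths :: "nat set set \<Rightarrow> nat set \<Rightarrow> nat set \<Rightarrow> nat list set" where
  "graph_paths E V1 V2 = {\<gamma>. \<gamma> \<noteq> [] \<and> hd \<gamma> \<in> V1 \<and> last \<gamma> \<in> V2 \<and>
      (\<forall>k. Suc k < length \<gamma> \<longrightarrow> {\<gamma> ! k, \<gamma> ! Suc k} \<in> E)}"

definition admissible ::
    "nat set \<Rightarrow> nat set set \<Rightarrow> nat set \<Rightarrow> nat set \<Rightarrow> (nat \<Rightarrow> real) \<Rightarrow> bool" where
  "admissible V E V1 V2 \<eta> \<longleftrightarrow>
     (\<forall>v\<in>V. \<eta> v \<ge> 0) \<and>
     (\<forall>\<gamma>\<in>graph_paths E V1 V2. (\<Sum>v\<in>set \<gamma>. \<eta> v) \<ge> 1)"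

definition vmod :: "nat set \<Rightarrow> nat set set \<Rightarrow> nat set \<Rightarrow> nat set \<Rightarrow> ennreal" where
  "vmod V E V1 V2 = (INF \<eta>\<in>{\<eta>. admissible V E V1 V2 \<eta>}.
       (\<Sum>\<^sub>\<infinity> v\<in>V. ennreal ((\<eta> v)\<^sup>2)))"

definition VEL :: "nat set \<Rightarrow> nat set set \<Rightarrow> nat set \<Rightarrow> nat set \<Rightarrow> ennreal" where
  "VEL V E V1 V2 = 1 / vmod V E V1 V2"

end

theory Submission
  imports Defs
begin

text \<open>Let g be the norm clamped to [r1, r2] and let \<eta>(v) be the largest jump of g along an
  edge at v, divided by r2 - r1. Along a path from V1 (where g = r1) to V2 (where g = r2) the
  jumps telescope, so \<eta> is admissible. If v has a neighbour w with jump \<delta>, the edge from v to w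
  contains a point whose norm lies midway between the two clamped values, and since the face
  through that edge has all angles at least \<epsilon>, it contains a disc of radius comparable to \<delta>
  inside the closed annulus r1 \<le> |z| \<le> r2. These discs lie in face interiors and each face
  serves at most its three vertices, so the sum of the squares of \<eta> is at most a multiple of
  area(annulus) / (r2 - r1)^2 = \<pi> (r2 + r1) / (r2 - r1), which is comparable to
  1 / (1 - (r1 / r2)^2).\<close>

section \<open>Triangles with angles bounded below contain large discs\<close>

definition det2 :: "complex \<Rightarrow> complex \<Rightarrow> real" where
  "det2 u v = Re u * Im v - Im u * Re v"

lemma det2_sq_add_inner_sq: "(det2 u v)\<^sup>2 + (u \<bullet> v)\<^sup>2 = (norm u)\<^sup>2 * (norm v)\<^sup>2"
  unfolding det2_def inner_complex_def cmod_power2 by algebra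

lemma abs_det2_le: "\<bar>det2 u v\<bar> \<le> norm u * norm v"
proof -
  have "(det2 u v)\<^sup>2 \<le> (det2 u v)\<^sup>2 + (u \<bullet> v)\<^sup>2" by simp
  also have "\<dots> = (norm u * norm v)\<^sup>2" by (simp add: det2_sq_add_inner_sq power_mult_distrib)
  finally show ?thesis using abs_le_square_iff[of "det2 u v" "norm u * norm v"] by simp
qed

lemma det2_diff_diff: "det2 (a - d) (b - d) = det2 a b + det2 (b - a) d"
  by (simp add: det2_def algebra_simps)

text \<open>The three ratios are the barycentric coordinates of w.\<close>

lemma in_convex_hull_3_if_det2_ratios_nonneg:
  fixes X Y Z w :: complex
  defines "\<Delta> \<equiv> det2 (Y - X) (Z - X)"
  assumes "\<Delta> \<noteq> 0"
    and "0 \<le> det2 (Y - w) (Z - w) / \<Delta>" "0 \<le> det2 (Z - w) (X - w) / \<Delta>"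
        "0 \<le> det2 (X - w) (Y - w) / \<Delta>"
  shows "w \<in> convex hull {X, Y, Z}"
proof -
  have "\<Delta> *\<^sub>R w = det2 (Y - w) (Z - w) *\<^sub>R X + det2 (Z - w) (X - w) *\<^sub>R Y + det2 (X - w) (Y - w) *\<^sub>R Z"
    unfolding \<Delta>_def det2_def by (simp add: complex_eq_iff algebra_simps)
  then have "w = inverse \<Delta> *\<^sub>R (det2 (Y - w) (Z - w) *\<^sub>R X + det2 (Z - w) (X - w) *\<^sub>R Y
                                 + det2 (X - w) (Y - w) *\<^sub>R Z)"
    using \<open>\<Delta> \<noteq> 0\<close> by (metis scaleR_scaleR left_inverse scaleR_one)
  then have "w = (det2 (Y - w) (Z - w) / \<Delta>) *\<^sub>R X + (det2 (Z - w) (X - w) / \<Delta>) *\<^sub>R Y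
            + (det2 (X - w) (Y - w) / \<Delta>) *\<^sub>R Z"
    by (simp add: scaleR_add_right divide_inverse_commute)
  moreover have "det2 (Y - w) (Z - w) + det2 (Z - w) (X - w) + det2 (X - w) (Y - w) = \<Delta>"
    unfolding \<Delta>_def det2_def by (simp add: algebra_simps)
  then have "det2 (Y - w) (Z - w) / \<Delta> + det2 (Z - w) (X - w) / \<Delta> + det2 (X - w) (Y - w) / \<Delta> = 1"
    using \<open>\<Delta> \<noteq> 0\<close> by (simp add: add_divide_distrib[symmetric])
  ultimately show ?thesis
    unfolding convex_hull_3 using assms(3-5) by blast
qed

lemma centroid_ball_subset_convex_hull_3:
  fixes X Y Z :: complex
  assumes "0 < L" "norm (Y - X) \<le> L" "norm (Z - Y) \<le> L" "norm (X - Z) \<le> L"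
  shows "ball ((X + Y + Z) / 3) (\<bar>det2 (Y - X) (Z - X)\<bar> / (3 * L)) \<subseteq> convex hull {X, Y, Z}"
proof
  define \<Delta> where "\<Delta> = det2 (Y - X) (Z - X)"
  define G where "G = (X + Y + Z) / 3"
  fix w assume "w \<in> ball ((X + Y + Z) / 3) (\<bar>det2 (Y - X) (Z - X)\<bar> / (3 * L))"
  then have d: "norm (w - G) * L < \<bar>\<Delta>\<bar> / 3"
    using \<open>0 < L\<close> by (simp add: G_def \<Delta>_def dist_norm norm_minus_commute pos_less_divide_eq)
  then have "\<Delta> \<noteq> 0"
    using \<open>0 < L\<close> by (metis abs_zero divide_eq_0_iff mult_nonneg_nonneg norm_ge_zero not_less less_le)
  have coordinate: "0 \<le> det2 (B - w) (C - w) / \<Delta>"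
    if "det2 (B - G) (C - G) = \<Delta> / 3" "norm (C - B) \<le> L" for B C
  proof -
    have "\<bar>det2 (C - B) (w - G)\<bar> \<le> L * norm (w - G)"
      using abs_det2_le[of "C - B" "w - G"] that(2) by (meson mult_right_mono norm_ge_zero order_trans)
    then have "\<bar>det2 (C - B) (w - G)\<bar> < \<bar>\<Delta>\<bar> / 3" using d by (simp add: mult.commute)
    moreover have "det2 (B - w) (C - w) = \<Delta> / 3 + det2 (C - B) (w - G)"
      using det2_diff_diff[of "B - G" "w - G" "C - G"] that(1) by simp
    ultimately show ?thesis
      by (cases "\<Delta> > 0") (auto simp: zero_le_divide_iff)
  qed
  have "det2 (Y - G) (Z - G) = \<Delta> / 3" "det2 (Z - G) (X - G) = \<Delta> / 3" "det2 (X - G) (Y - G) = \<Delta> / 3"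
    unfolding G_def \<Delta>_def det2_def by (simp_all add: algebra_simps add_divide_distrib)
  with coordinate assms(2-4) show "w \<in> convex hull {X, Y, Z}"
    using in_convex_hull_3_if_det2_ratios_nonneg[where X=X and Y=Y and Z=Z and w=w] \<open>\<Delta> \<noteq> 0\<close> unfolding \<Delta>_def by blast
qed

definition cos_angle_le :: "real \<Rightarrow> complex \<Rightarrow> complex \<Rightarrow> complex \<Rightarrow> bool" where
  "cos_angle_le k a b c \<longleftrightarrow> (b - a) \<bullet> (c - a) \<le> k * norm (b - a) * norm (c - a)"

lemma cos_angle_le_commute: "cos_angle_le k a b c \<longleftrightarrow> cos_angle_le k a c b"
  by (simp add: cos_angle_le_def inner_commute mult_ac)

definition fat_triangle :: "real \<Rightarrow> complex \<Rightarrow> complex \<Rightarrow> complex \<Rightarrow> bool" where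
  "fat_triangle k X Y Z \<longleftrightarrow> cos_angle_le k X Y Z \<and> cos_angle_le k Y Z X \<and> cos_angle_le k Z X Y"

lemma fat_triangle_rotate: "fat_triangle k X Y Z \<Longrightarrow> fat_triangle k Y Z X"
  by (simp add: fat_triangle_def)

lemma fat_triangle_swap: "fat_triangle k X Y Z \<Longrightarrow> fat_triangle k Y X Z"
  by (auto simp: fat_triangle_def cos_angle_le_commute)

lemma det2_rotate: "det2 (Z - Y) (X - Y) = det2 (Y - X) (Z - X)"
  by (simp add: det2_def algebra_simps)

lemma abs_det2_ge_of_inner_le:
  assumes "0 \<le> u \<bullet> v" "u \<bullet> v \<le> k * norm u * norm v"
  shows "sqrt (1 - k\<^sup>2) * norm u * norm v \<le> \<bar>det2 u v\<bar>"
proof -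
  have "(u \<bullet> v)\<^sup>2 \<le> (k * norm u * norm v)\<^sup>2"
    using assms by (intro power_mono) auto
  then have "(1 - k\<^sup>2) * ((norm u)\<^sup>2 * (norm v)\<^sup>2) \<le> (det2 u v)\<^sup>2"
    using det2_sq_add_inner_sq[of u v] by (simp add: power_mult_distrib algebra_simps)
  then have "sqrt ((1 - k\<^sup>2) * ((norm u)\<^sup>2 * (norm v)\<^sup>2)) \<le> sqrt ((det2 u v)\<^sup>2)"
    by (rule real_sqrt_le_mono)
  then show ?thesis by (simp add: real_sqrt_mult mult.assoc)
qed

text \<open>The angles at the ends of a longest side are acute, so each of them bounds the area.\<close>

lemma fat_triangle_abs_det2_ge_longest_side:
  assumes "fat_triangle k X Y Z" "0 \<le> k" "k < 1"
    and "norm (X - Y) \<le> norm (Z - Y)" "norm (X - Z) \<le> norm (Z - Y)"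
  shows "sqrt (1 - k\<^sup>2) / 2 * (norm (Z - Y))\<^sup>2 \<le> \<bar>det2 (Y - X) (Z - X)\<bar>"
proof -
  define s where "s = sqrt (1 - k\<^sup>2)"
  have "0 \<le> s" unfolding s_def using assms(2,3) by (simp add: power_le_one)
  have acute: "0 \<le> (B - A) \<bullet> (X - A)" if "norm (X - B) \<le> norm (B - A)" for A B
  proof -
    have "(norm (X - B))\<^sup>2 = (norm (B - A))\<^sup>2 + (norm (X - A))\<^sup>2 - 2 * ((B - A) \<bullet> (X - A))"
      using dot_norm_neg[of "X - A" "B - A"] by (simp add: inner_commute)
    moreover have "(norm (X - B))\<^sup>2 \<le> (norm (B - A))\<^sup>2"
      using that by (simp add: power_mono)
    ultimately show ?thesis using zero_le_power2[of "norm (X - A)"] by linarith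
  qed
  have "cos_angle_le k Y Z X" "cos_angle_le k Z Y X"
    using assms(1) cos_angle_le_commute unfolding fat_triangle_def by blast+
  moreover have "norm (X - Y) \<le> norm (Y - Z)"
    using assms(4) by (simp add: norm_minus_commute[of Z Y])
  ultimately have "s * norm (Z - Y) * norm (X - Y) \<le> \<bar>det2 (Z - Y) (X - Y)\<bar>"
    and "s * norm (Y - Z) * norm (X - Z) \<le> \<bar>det2 (Y - Z) (X - Z)\<bar>"
    using abs_det2_ge_of_inner_le[of "Z - Y" "X - Y" k] abs_det2_ge_of_inner_le[of "Y - Z" "X - Z" k]
      acute[of Y Z] acute[of Z Y] assms(5)
    unfolding s_def cos_angle_le_def by simp_all
  moreover have "\<bar>det2 (Y - Z) (X - Z)\<bar> = \<bar>det2 (Y - X) (Z - X)\<bar>"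
    by (simp add: det2_def algebra_simps)
  moreover have "s * norm (Z - Y) * norm (Z - Y) \<le> s * norm (Z - Y) * (norm (X - Y) + norm (X - Z))"
    using \<open>0 \<le> s\<close> norm_triangle_ineq4[of "X - Y" "X - Z"]
    by (intro mult_left_mono) (auto simp: norm_minus_commute)
  ultimately show ?thesis
    unfolding s_def det2_rotate by (simp add: norm_minus_commute power2_eq_square algebra_simps)
qed

lemma fat_triangle_abs_det2_ge:
  assumes "fat_triangle k X Y Z" "0 \<le> k" "k < 1"
  defines "L \<equiv> max (norm (Y - X)) (max (norm (Z - Y)) (norm (X - Z)))"
  shows "sqrt (1 - k\<^sup>2) / 2 * L\<^sup>2 \<le> \<bar>det2 (Y - X) (Z - X)\<bar>"
proof -
  have rotated: "fat_triangle k Y Z X" "fat_triangle k Z X Y"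
    using assms(1) fat_triangle_rotate by blast+
  have "L = norm (Z - Y) \<or> L = norm (X - Z) \<or> L = norm (Y - X)"
    unfolding L_def by linarith
  moreover have "norm (X - Y) \<le> L" "norm (Y - Z) \<le> L" "norm (Z - X) \<le> L"
    unfolding L_def by (simp_all add: norm_minus_commute)
  ultimately show ?thesis
    using fat_triangle_abs_det2_ge_longest_side[OF assms(1-3)]
      fat_triangle_abs_det2_ge_longest_side[OF rotated(1) assms(2,3)]
      fat_triangle_abs_det2_ge_longest_side[OF rotated(2) assms(2,3)]
    unfolding L_def by (auto simp: det2_rotate norm_minus_commute)
qed

lemma fat_triangle_centroid_ball:
  assumes "fat_triangle k X Y Z" "0 \<le> k" "k < 1"
  defines "L \<equiv> max (norm (Y - X)) (max (norm (Z - Y)) (norm (X - Z)))"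
  shows "ball ((X + Y + Z) / 3) (sqrt (1 - k\<^sup>2) * L / 6) \<subseteq> convex hull {X, Y, Z}"
proof (cases "L = 0")
  case False
  moreover have "0 \<le> L" unfolding L_def by (simp add: le_max_iff_disj)
  ultimately have "0 < L" by simp
  have "sqrt (1 - k\<^sup>2) * L / 6 \<le> \<bar>det2 (Y - X) (Z - X)\<bar> / (3 * L)"
    using fat_triangle_abs_det2_ge[OF assms(1-3)] \<open>0 < L\<close>
    unfolding L_def by (simp add: field_simps power2_eq_square)
  also have "ball ((X + Y + Z) / 3) (\<bar>det2 (Y - X) (Z - X)\<bar> / (3 * L)) \<subseteq> convex hull {X, Y, Z}"
    by (rule centroid_ball_subset_convex_hull_3) (use \<open>0 < L\<close> in \<open>auto simp: L_def\<close>)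
  finally show ?thesis by (metis subset_ball)
qed simp

lemma convex_shifted_homothety_mem:
  assumes "convex T" "P \<in> T" "Q \<in> T" "x \<in> T" "0 \<le> a" "0 \<le> t" "a + t \<le> 1"
  shows "P + a *\<^sub>R (Q - P) + t *\<^sub>R (x - P) \<in> T"
proof -
  have "P + a *\<^sub>R (Q - P) + t *\<^sub>R (x - P) = (1 - a - t) *\<^sub>R P + a *\<^sub>R Q + t *\<^sub>R x"
    by (simp add: algebra_simps)
  moreover have "(1 - a - t) *\<^sub>R P + a *\<^sub>R Q + t *\<^sub>R x \<in> convex hull {P, Q, x}"
    unfolding convex_hull_3 using assms(5-7) by (intro CollectI exI[of _ "1 - a - t"] exI[of _ a] exI[of _ t]) auto
  moreover have "convex hull {P, Q, x} \<subseteq> T"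
    using assms(1-4) by (intro hull_minimal) auto
  ultimately show ?thesis by auto
qed

text \<open>Shrink the triangle towards P by the factor t = \<rho> / L and slide it along PQ
  to the point m; the image of the centroid ball is the required disc.\<close>

lemma fat_triangle_ball_near_first_half:
  assumes "fat_triangle k P Q R" "0 \<le> k" "k < 1"
    and "0 \<le> a" "a \<le> 1 / 2" "0 < \<rho>" "\<rho> \<le> norm (Q - P) / 2"
  shows "\<exists>z. ball z (sqrt (1 - k\<^sup>2) * \<rho> / 6) \<subseteq> convex hull {P, Q, R} \<inter> cball (P + a *\<^sub>R (Q - P)) \<rho>"
proof -
  define T where "T = convex hull {P, Q, R}"
  define L where "L = max (norm (Q - P)) (max (norm (R - Q)) (norm (P - R)))"
  define s where "s = sqrt (1 - k\<^sup>2)"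
  define G where "G = (P + Q + R) / 3"
  define m where "m = P + a *\<^sub>R (Q - P)"
  define t where "t = \<rho> / L"
  have centroid_ball: "ball G (s * L / 6) \<subseteq> T"
    using fat_triangle_centroid_ball[OF assms(1-3)] unfolding T_def L_def s_def G_def .
  have "norm (Q - P) \<le> L" unfolding L_def by simp
  then have "0 < L" "0 < t" "t \<le> 1 / 2" "t * L = \<rho>"
    using assms(6,7) by (auto simp: t_def field_simps)
  have "T \<subseteq> cball P L"
    using \<open>0 < L\<close> unfolding T_def L_def
    by (intro hull_minimal) (auto simp: dist_norm norm_minus_commute)
  have "ball (m + t *\<^sub>R (G - P)) (s * \<rho> / 6) \<subseteq> T \<inter> cball m \<rho>"
  proof
    fix w assume w: "w \<in> ball (m + t *\<^sub>R (G - P)) (s * \<rho> / 6)"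
    define x where "x = P + (1 / t) *\<^sub>R (w - m)"
    have w_eq: "w = m + t *\<^sub>R (x - P)" unfolding x_def using \<open>0 < t\<close> by simp
    have "norm (x - G) = norm (w - (m + t *\<^sub>R (G - P))) / t"
      unfolding w_eq using \<open>0 < t\<close> by (simp add: algebra_simps flip: scaleR_diff_right)
    also have "\<dots> < s * L / 6"
      using w \<open>0 < t\<close> \<open>t * L = \<rho>\<close> by (auto simp: dist_norm norm_minus_commute divide_simps mult_ac)
    finally have "x \<in> T" using centroid_ball by (auto simp: dist_norm norm_minus_commute)
    then have "w \<in> T"
      unfolding w_eq m_def T_def
      using \<open>0 < t\<close> \<open>t \<le> 1 / 2\<close> assms(4,5)
      by (intro convex_shifted_homothety_mem) (auto simp: hull_inc)
    moreover have "norm (w - m) \<le> \<rho>"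
      using \<open>x \<in> T\<close> \<open>T \<subseteq> cball P L\<close> \<open>0 < t\<close> \<open>t * L = \<rho>\<close>
      by (auto simp: w_eq dist_norm norm_minus_commute intro: order_trans[OF mult_left_mono])
    ultimately show "w \<in> T \<inter> cball m \<rho>" by (simp add: dist_norm norm_minus_commute)
  qed
  then show ?thesis unfolding T_def m_def s_def by blast
qed

lemma fat_triangle_ball_near_side:
  assumes "fat_triangle k X Y Z" "0 \<le> k" "k < 1"
    and "m \<in> closed_segment X Y" "0 < \<rho>" "\<rho> \<le> norm (Y - X) / 2"
  shows "\<exists>z. ball z (sqrt (1 - k\<^sup>2) * \<rho> / 6) \<subseteq> convex hull {X, Y, Z} \<inter> cball m \<rho>"
proof -
  obtain u where u: "0 \<le> u" "u \<le> 1" "m = (1 - u) *\<^sub>R X + u *\<^sub>R Y"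
    using assms(4) unfolding closed_segment_def by blast
  show ?thesis
  proof (cases "u \<le> 1 / 2")
    case True
    have "m = X + u *\<^sub>R (Y - X)" using u by (simp add: algebra_simps)
    then show ?thesis using fat_triangle_ball_near_first_half[OF assms(1-3) u(1) True assms(5,6)] by simp
  next
    case False
    have "m = Y + (1 - u) *\<^sub>R (X - Y)" using u by (simp add: algebra_simps)
    moreover have "convex hull {Y, X, Z} = convex hull {X, Y, Z}" by (simp add: insert_commute)
    ultimately show ?thesis
      using fat_triangle_ball_near_first_half[OF fat_triangle_swap[OF assms(1)] assms(2,3), of "1 - u" \<rho>]
        False u(2) assms(5,6) by (simp add: norm_minus_commute)
  qed
qed

section \<open>Faces of a geodesic triangulation\<close>

lemma triangulation_face:
  assumes "triangulation_data V E F" "f \<in> F"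
  shows "finite f" "card f = 3" "f \<subseteq> V"
proof -
  show "card f = 3" "f \<subseteq> V" using assms unfolding triangulation_data_def by auto
  then show "finite f" by (intro card_ge_0_finite) simp
qed

lemma triangulation_edge_in_face:
  assumes "triangulation_data V E F" "{v, w} \<in> E"
  obtains u where "{v, w, u} \<in> F"
proof -
  obtain f where f: "f \<in> F" "{v, w} \<subseteq> f" and "card {v, w} = 2"
    using assms unfolding triangulation_data_def by auto
  then have "v \<noteq> w" by auto
  have "finite f" "card f = 3" using triangulation_face[OF assms(1) f(1)] by auto
  moreover have "\<not> f \<subseteq> {v, w}"
    using card_mono[of "{v, w}" f] \<open>card {v, w} = 2\<close> \<open>card f = 3\<close> by fastforce
  ultimately obtain u where "u \<in> f" "u \<notin> {v, w}" by blast
  then have "{v, w, u} = f"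
    using f \<open>finite f\<close> \<open>card f = 3\<close> \<open>v \<noteq> w\<close> by (intro card_subset_eq) auto
  then show ?thesis using that f(1) by blast
qed

lemma geo_triangle_interiors_disjoint:
  assumes "geodesic_homeomorphism V E F p" "f \<in> F" "g \<in> F" "f \<noteq> g"
  shows "interior (geo_triangle p f) \<inter> interior (geo_triangle p g) = {}"
proof -
  have tri: "triangulation_data V E F"
    and meet: "geo_triangle p f \<inter> geo_triangle p g = geo_triangle p (f \<inter> g)"
    using assms unfolding geodesic_homeomorphism_def by auto
  have "\<not> f \<subseteq> g"
    using assms(4) card_subset_eq[of g f] triangulation_face[OF tri assms(2)]
      triangulation_face[OF tri assms(3)] by auto
  then have "card (f \<inter> g) < 3"
    using psubset_card_mono[of f "f \<inter> g"] triangulation_face[OF tri assms(2)] by auto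
  then have "card (p ` (f \<inter> g)) \<le> DIM(complex)"
    using card_image_le[of "f \<inter> g" p] triangulation_face[OF tri assms(2)] by simp
  then have "interior (geo_triangle p (f \<inter> g)) = {}"
    unfolding geo_triangle_def
    using triangulation_face[OF tri assms(2)] by (intro empty_interior_convex_hull) auto
  then show ?thesis using meet by (simp flip: interior_Int)
qed

lemma sum_emeasure_le_bounded_overlap:
  assumes "finite W" "\<And>v. v \<in> W \<Longrightarrow> B v \<in> sets M" "\<And>v. v \<in> W \<Longrightarrow> B v \<subseteq> A" "A \<in> sets M"
    and "\<And>x. card {v \<in> W. x \<in> B v} \<le> n"
  shows "(\<Sum>v\<in>W. emeasure M (B v)) \<le> of_nat n * emeasure M A"
proof -
  have "(\<Sum>v\<in>W. indicator (B v) x) \<le> of_nat n * (indicator A x :: ennreal)" for x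
  proof -
    have "(\<Sum>v\<in>W. indicator (B v) x :: ennreal) = of_nat (card {v \<in> W. x \<in> B v})"
      using assms(1) by (simp add: indicator_def sum.If_cases Int_def)
    moreover have "x \<notin> A \<Longrightarrow> {v \<in> W. x \<in> B v} = {}" using assms(3) by auto
    ultimately show ?thesis using assms(5)[of x] by (cases "x \<in> A") auto
  qed
  then have "(\<integral>\<^sup>+ x. (\<Sum>v\<in>W. indicator (B v) x) \<partial>M) \<le> (\<integral>\<^sup>+ x. of_nat n * indicator A x \<partial>M)"
    by (intro nn_integral_mono)
  then show ?thesis
    using assms(2,4) by (simp add: nn_integral_sum nn_integral_cmult_indicator)
qed

lemma card_face_interior_overlap_le_3:
  assumes "geodesic_homeomorphism V E F p" "finite W"
    and "\<And>v. v \<in> W \<Longrightarrow> x \<in> B v \<Longrightarrow>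
           face v \<in> F \<and> v \<in> face v \<and> B v \<subseteq> interior (geo_triangle p (face v))"
  shows "card {v \<in> W. x \<in> B v} \<le> 3"
proof (cases "{v \<in> W. x \<in> B v} = {}")
  case False
  then obtain v0 where "v0 \<in> W" "x \<in> B v0" by auto
  have tri: "triangulation_data V E F"
    using assms(1) unfolding geodesic_homeomorphism_def by simp
  have "face v = face v0" if "v \<in> W" "x \<in> B v" for v
    using geo_triangle_interiors_disjoint[OF assms(1)] assms(3) that \<open>v0 \<in> W\<close> \<open>x \<in> B v0\<close> by blast
  then have "{v \<in> W. x \<in> B v} \<subseteq> face v0" using assms(3) by force
  then show ?thesis
    using triangulation_face[OF tri] assms(3) \<open>v0 \<in> W\<close> \<open>x \<in> B v0\<close> by (metis card_mono)
next
  case True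
  then show ?thesis by (metis card.empty zero_le_numeral)
qed

text \<open>Faces have three elements, so a, b, c are distinct whenever {a, b, c} \<in> F.\<close>

definition fat_faces :: "nat set set \<Rightarrow> (nat \<Rightarrow> complex) \<Rightarrow> real \<Rightarrow> bool" where
  "fat_faces F p k \<longleftrightarrow> (\<forall>a b c. {a, b, c} \<in> F \<longrightarrow> fat_triangle k (p a) (p b) (p c))"

lemma cos_angle_le_of_inner_angle_ge:
  assumes "0 \<le> \<epsilon>" "\<epsilon> \<le> inner_angle a b c" "b \<noteq> a" "c \<noteq> a"
  shows "cos_angle_le (cos (min \<epsilon> 1)) a b c"
proof -
  define x where "x = ((b - a) \<bullet> (c - a)) / (norm (b - a) * norm (c - a))"
  have "0 < norm (b - a) * norm (c - a)" using assms(3,4) by simp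
  moreover have "\<bar>(b - a) \<bullet> (c - a)\<bar> \<le> norm (b - a) * norm (c - a)" by (rule Cauchy_Schwarz_ineq2)
  ultimately have "\<bar>x\<bar> \<le> 1" unfolding x_def by (simp add: abs_divide divide_le_eq)
  moreover have "min \<epsilon> 1 \<le> arccos x" using assms(2) unfolding inner_angle_def x_def by linarith
  ultimately have "x \<le> cos (min \<epsilon> 1)"
    using cos_monotone_0_pi_le[of "min \<epsilon> 1" "arccos x"] assms(1) arccos_ubound[of x]
    by (simp add: cos_arccos_abs)
  then show ?thesis
    using \<open>0 < norm (b - a) * norm (c - a)\<close>
    unfolding cos_angle_le_def x_def by (simp add: divide_le_eq mult.assoc)
qed

lemma cos_min_one_bounds:
  fixes \<epsilon> :: real
  assumes "0 < \<epsilon>" shows "0 \<le> cos (min \<epsilon> 1)" "cos (min \<epsilon> 1) < 1"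
proof -
  have "0 < min \<epsilon> 1" "min \<epsilon> 1 \<le> 1" "1 < pi / 2" using assms pi_gt3 by (auto simp: min_def)
  then show "0 \<le> cos (min \<epsilon> 1)" "cos (min \<epsilon> 1) < 1"
    using cos_monotone_0_pi[of 0 "min \<epsilon> 1"] by (auto intro: cos_ge_zero)
qed

lemma card_3_distinct: "card {a, b, c} = 3 \<Longrightarrow> a \<noteq> b \<and> b \<noteq> c \<and> c \<noteq> a"
  by (auto simp: card_insert_if split: if_splits)

lemma uniformly_nondegenerate_fat_faces:
  assumes "geodesic_homeomorphism V E F p" "uniformly_nondegenerate F p \<epsilon>" "0 \<le> \<epsilon>"
  shows "fat_faces F p (cos (min \<epsilon> 1))"
  unfolding fat_faces_def fat_triangle_def
proof (intro allI impI)
  fix a b c assume "{a, b, c} \<in> F"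
  then obtain f where face: "f \<in> F" "f = {a, b, c}" by blast
  have tri: "triangulation_data V E F" and "inj_on p V"
    using assms(1) unfolding geodesic_homeomorphism_def by simp_all
  have "card f = 3" "f \<subseteq> V" using triangulation_face[OF tri face(1)] by auto
  have angle: "cos_angle_le (cos (min \<epsilon> 1)) (p x) (p y) (p z)"
    if "x \<in> f" "y \<in> f" "z \<in> f" "x \<noteq> y" "x \<noteq> z" "y \<noteq> z" for x y z
  proof (rule cos_angle_le_of_inner_angle_ge[OF assms(3)])
    show "\<epsilon> \<le> inner_angle (p x) (p y) (p z)"
      using assms(2) face(1) that unfolding uniformly_nondegenerate_def by blast
    show "p y \<noteq> p x" "p z \<noteq> p x"
      using inj_onD[OF \<open>inj_on p V\<close>, of y x] inj_onD[OF \<open>inj_on p V\<close>, of z x]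
        \<open>f \<subseteq> V\<close> that by auto
  qed
  have "a \<noteq> b" "b \<noteq> c" "c \<noteq> a"
    using card_3_distinct[of a b c] \<open>card f = 3\<close> face(2) by simp_all
  then show "cos_angle_le (cos (min \<epsilon> 1)) (p a) (p b) (p c) \<and>
      cos_angle_le (cos (min \<epsilon> 1)) (p b) (p c) (p a) \<and> cos_angle_le (cos (min \<epsilon> 1)) (p c) (p a) (p b)"
    using angle[of a b c] angle[of b c a] angle[of c a b] face(2) by simp
qed

section \<open>The clamped radial metric\<close>

lemma clamp_real: "(a::real) \<le> b \<Longrightarrow> clamp a b x = max a (min b x)"
  unfolding clamp_def Basis_real_def by auto

lemma abs_clamp_diff_le: "\<bar>clamp a b x - clamp a b y\<bar> \<le> \<bar>x - y :: real\<bar>"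
  using dist_clamps_le_dist_args[of a b x y] by (simp add: dist_real_def)

lemma closed_segment_norm_between:
  fixes X Y :: complex
  assumes "norm X \<le> y" "y \<le> norm Y"
  shows "\<exists>m\<in>closed_segment X Y. norm m = y"
proof -
  have "connected (norm ` closed_segment X Y)"
    by (intro connected_continuous_image continuous_intros) simp
  moreover have "norm X \<in> norm ` closed_segment X Y" "norm Y \<in> norm ` closed_segment X Y" by auto
  ultimately have "y \<in> norm ` closed_segment X Y"
    using assms connected_contains_Icc by fastforce
  then show ?thesis by auto
qed

lemma clamp_less_clampD:
  fixes x y :: real
  assumes "a \<le> b" "clamp a b x < clamp a b y"
  shows "x \<le> clamp a b x" "clamp a b y \<le> y"
  using assms by (auto simp: clamp_real max_def min_def split: if_splits)

lemma closed_segment_norm_midpoint_clamp: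
  fixes X Y :: complex and r1 r2 :: real
  defines "a \<equiv> clamp r1 r2 (norm X)" and "b \<equiv> clamp r1 r2 (norm Y)"
  assumes "r1 \<le> r2" "a \<noteq> b"
  shows "\<exists>m\<in>closed_segment X Y. norm m = (a + b) / 2"
proof (cases "a < b")
  case True
  then have "norm X \<le> a" "b \<le> norm Y"
    using clamp_less_clampD[OF assms(3), of "norm X" "norm Y"] unfolding a_def b_def by auto
  then show ?thesis
    using closed_segment_norm_between[of X "(a + b) / 2" Y] True by simp
next
  case False
  then have "b < a" using assms(4) by simp
  then have "norm Y \<le> b" "a \<le> norm X"
    using clamp_less_clampD[OF assms(3), of "norm Y" "norm X"] unfolding a_def b_def by auto
  then show ?thesis
    using closed_segment_norm_between[of Y "(a + b) / 2" X] \<open>b < a\<close> by (simp add: closed_segment_commute)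
qed

lemma cball_midpoint_subset_annulus:
  fixes m :: complex
  assumes "r1 \<le> a" "a \<le> r2" "r1 \<le> b" "b \<le> r2" "norm m = (a + b) / 2" "\<delta> \<le> \<bar>b - a\<bar>"
  shows "cball m (\<delta> / 2) \<subseteq> cball 0 r2 - ball 0 r1"
proof
  fix z assume "z \<in> cball m (\<delta> / 2)"
  then have "\<bar>norm z - norm m\<bar> \<le> \<delta> / 2"
    using norm_triangle_ineq3[of z m] by (simp add: dist_norm norm_minus_commute)
  then have "r1 \<le> norm z \<and> norm z \<le> r2"
    using assms unfolding abs_le_iff by (cases "a \<le> b") (simp_all add: field_simps)
  then show "z \<in> cball 0 r2 - ball 0 r1" by simp
qed

lemma edge_face_disc_in_annulus:
  assumes gh: "geodesic_homeomorphism V E F p" and fat: "fat_faces F p k" "0 \<le> k" "k < 1"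
    and "r1 \<le> r2" "{v, w} \<in> E"
    and "0 < \<delta>" "\<delta> \<le> \<bar>clamp r1 r2 (norm (p w)) - clamp r1 r2 (norm (p v))\<bar>"
  obtains f z where "f \<in> F" "v \<in> f"
    "ball z (sqrt (1 - k\<^sup>2) * \<delta> / 12) \<subseteq> interior (geo_triangle p f) \<inter> (cball 0 r2 - ball 0 r1)"
proof -
  have tri: "triangulation_data V E F"
    using gh unfolding geodesic_homeomorphism_def by simp
  obtain u where face: "{v, w, u} \<in> F"
    using triangulation_edge_in_face[OF tri \<open>{v, w} \<in> E\<close>] by blast
  then have fat_tri: "fat_triangle k (p v) (p w) (p u)"
    using fat unfolding fat_faces_def by blast
  have "clamp r1 r2 (norm (p v)) \<noteq> clamp r1 r2 (norm (p w))" using assms(7,8) by auto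
  then obtain m where m: "m \<in> closed_segment (p v) (p w)"
    "norm m = (clamp r1 r2 (norm (p v)) + clamp r1 r2 (norm (p w))) / 2"
    using closed_segment_norm_midpoint_clamp[OF \<open>r1 \<le> r2\<close>] by blast
  have "cball m (\<delta> / 2) \<subseteq> cball 0 r2 - ball 0 r1"
    using cball_midpoint_subset_annulus[OF _ _ _ _ m(2) assms(8)] \<open>r1 \<le> r2\<close> by (simp add: clamp_real)
  have "\<delta> / 2 \<le> norm (p w - p v) / 2"
    using assms(8) abs_clamp_diff_le[of r1 r2 "norm (p w)" "norm (p v)"] norm_triangle_ineq3[of "p w" "p v"]
    by linarith
  obtain z where
    "ball z (sqrt (1 - k\<^sup>2) * (\<delta> / 2) / 6) \<subseteq> convex hull {p v, p w, p u} \<inter> cball m (\<delta> / 2)"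
    using fat_triangle_ball_near_side[OF fat_tri fat(2,3) m(1) _ \<open>\<delta> / 2 \<le> norm (p w - p v) / 2\<close>]
      \<open>0 < \<delta>\<close> by auto
  with \<open>cball m (\<delta> / 2) \<subseteq> cball 0 r2 - ball 0 r1\<close>
  have "ball z (sqrt (1 - k\<^sup>2) * (\<delta> / 2) / 6) \<subseteq> convex hull {p v, p w, p u} \<inter> (cball 0 r2 - ball 0 r1)"
    by blast
  moreover have "sqrt (1 - k\<^sup>2) * (\<delta> / 2) / 6 = sqrt (1 - k\<^sup>2) * \<delta> / 12" by simp
  ultimately have "ball z (sqrt (1 - k\<^sup>2) * \<delta> / 12) \<subseteq> convex hull {p v, p w, p u}"
    and "ball z (sqrt (1 - k\<^sup>2) * \<delta> / 12) \<subseteq> cball 0 r2 - ball 0 r1" by auto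
  then show thesis
    using that[of "{v, w, u}" z] face interior_maximal[OF _ open_ball] by (simp add: geo_triangle_def) blast
qed

lemma successively_telescope:
  fixes h e :: "'a \<Rightarrow> real"
  assumes step: "\<And>x y. R x y \<Longrightarrow> h y - h x \<le> e x" and nonneg: "\<And>x. 0 \<le> e x"
  shows "successively R xs \<Longrightarrow> xs \<noteq> [] \<Longrightarrow> h (last xs) - h (hd xs) \<le> (\<Sum>v\<in>set xs. e v)"
proof (induction "length xs" arbitrary: xs rule: less_induct)
  case less
  then obtain x ys where xs: "xs = x # ys" by (cases xs) auto
  show ?case
  proof (cases "ys = []")
    case True
    then show ?thesis using xs nonneg by simp
  next
    case ys_ne: False
    show ?thesis
    proof (cases "x \<in> set ys")
      case True
      \<comment> \<open>x is counted only once in the sum, so cut out the loop from x back to x\<close>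
      then obtain as zs where ys: "ys = as @ x # zs" by (meson split_list)
      have "successively R (x # zs)"
        using less.prems(1) unfolding xs ys by (metis append_Cons successively_append_iff)
      then have "h (last (x # zs)) - h x \<le> (\<Sum>v\<in>set (x # zs). e v)"
        using less.hyps[of "x # zs"] xs ys by auto
      moreover have "last (x # zs) = last xs" using xs ys by (cases zs) auto
      moreover have "(\<Sum>v\<in>set (x # zs). e v) \<le> (\<Sum>v\<in>set xs. e v)"
        by (rule sum_mono2) (use xs ys nonneg in auto)
      ultimately show ?thesis using xs by simp
    next
      case False
      have "successively R ys" "R x (hd ys)"
        using less.prems(1) xs ys_ne by (cases ys; simp)+
      then have "h (last ys) - h (hd ys) \<le> (\<Sum>v\<in>set ys. e v)" "h (hd ys) - h x \<le> e x"
        using less.hyps[of ys] xs ys_ne step by auto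
      moreover have "(\<Sum>v\<in>set xs. e v) = e x + (\<Sum>v\<in>set ys. e v)"
        using xs False by simp
      ultimately show ?thesis using xs ys_ne by simp
    qed
  qed
qed

definition max_jump :: "nat set set \<Rightarrow> (nat \<Rightarrow> real) \<Rightarrow> nat \<Rightarrow> real" where
  "max_jump E g v = Sup (insert 0 {\<bar>g w - g v\<bar> | w. {v, w} \<in> E})"

lemma bdd_above_jumps:
  fixes g :: "nat \<Rightarrow> real"
  assumes "\<And>v. g v \<in> {a..b}"
  shows "bdd_above (insert 0 {\<bar>g w - g v\<bar> | w. {v, w} \<in> E})"
proof -
  have "\<bar>g w - g v\<bar> \<le> b - a" for w using assms[of v] assms[of w] by (simp add: abs_le_iff)
  then show ?thesis using assms[of v] unfolding bdd_above_def by (intro exI[of _ "b - a"]) auto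
qed

lemma max_jump_nonneg: "(\<And>v. g v \<in> {a..b}) \<Longrightarrow> 0 \<le> max_jump E g v"
  unfolding max_jump_def by (intro cSup_upper bdd_above_jumps) auto

lemma abs_jump_le_max_jump: "(\<And>v. g v \<in> {a..b}) \<Longrightarrow> {v, w} \<in> E \<Longrightarrow> \<bar>g w - g v\<bar> \<le> max_jump E g v"
  unfolding max_jump_def by (intro cSup_upper bdd_above_jumps) auto

lemma max_jump_half_attained:
  assumes "0 < max_jump E g v"
  obtains w where "{v, w} \<in> E" "max_jump E g v / 2 < \<bar>g w - g v\<bar>"
proof -
  have "max_jump E g v / 2 < Sup (insert 0 {\<bar>g w - g v\<bar> | w. {v, w} \<in> E})"
    using assms unfolding max_jump_def by simp
  then obtain x where "x \<in> insert 0 {\<bar>g w - g v\<bar> | w. {v, w} \<in> E}" "max_jump E g v / 2 < x"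
    by (rule less_cSupE) auto
  then show ?thesis using assms that by auto
qed

lemma admissible_max_jump:
  assumes range: "\<And>v. g v \<in> {a..b}" and "a < b"
    and "\<And>v. v \<in> V1 \<Longrightarrow> g v = a" "\<And>v. v \<in> V2 \<Longrightarrow> g v = b"
  shows "admissible V E V1 V2 (\<lambda>v. max_jump E g v / (b - a))"
  unfolding admissible_def
proof (intro conjI ballI)
  fix v show "0 \<le> max_jump E g v / (b - a)"
    using max_jump_nonneg[of g a b, OF range] \<open>a < b\<close> by simp
next
  fix \<gamma> assume "\<gamma> \<in> graph_paths E V1 V2"
  then have \<gamma>: "\<gamma> \<noteq> []" "hd \<gamma> \<in> V1" "last \<gamma> \<in> V2" "successively (\<lambda>x y. {x, y} \<in> E) \<gamma>"
    unfolding graph_paths_def by (auto simp: successively_conv_nth)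
  have "g (last \<gamma>) / (b - a) - g (hd \<gamma>) / (b - a) \<le> (\<Sum>v\<in>set \<gamma>. max_jump E g v / (b - a))"
  proof (rule successively_telescope[OF _ _ \<gamma>(4,1)])
    fix x y assume "{x, y} \<in> E"
    then show "g y / (b - a) - g x / (b - a) \<le> max_jump E g x / (b - a)"
      using abs_jump_le_max_jump[of g a b, OF range] \<open>a < b\<close>
      by (simp add: diff_divide_distrib[symmetric] divide_right_mono abs_le_iff)
  qed (use max_jump_nonneg[of g a b, OF range] \<open>a < b\<close> in simp)
  then show "1 \<le> (\<Sum>v\<in>set \<gamma>. max_jump E g v / (b - a))"
    using assms(3,4) \<gamma>(2,3) \<open>a < b\<close> by (simp add: diff_divide_distrib[symmetric])
qed

lemma max_jump_disc_in_annulus: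
  fixes p :: "nat \<Rightarrow> complex" and E :: "nat set set" and r1 r2 :: real
  defines "\<sigma> \<equiv> max_jump E (\<lambda>v. clamp r1 r2 (norm (p v)))"
  assumes "geodesic_homeomorphism V E F p" "fat_faces F p k" "0 \<le> k" "k < 1" "r1 \<le> r2" "0 < \<sigma> v"
  obtains f z where "f \<in> F" "v \<in> f"
    "ball z (sqrt (1 - k\<^sup>2) * \<sigma> v / 24) \<subseteq> interior (geo_triangle p f) \<inter> (cball 0 r2 - ball 0 r1)"
proof -
  obtain w where "{v, w} \<in> E" "\<sigma> v / 2 < \<bar>clamp r1 r2 (norm (p w)) - clamp r1 r2 (norm (p v))\<bar>"
    using max_jump_half_attained[OF assms(7)[unfolded \<sigma>_def]] unfolding \<sigma>_def by blast
  moreover have "sqrt (1 - k\<^sup>2) * (\<sigma> v / 2) / 12 = sqrt (1 - k\<^sup>2) * \<sigma> v / 24" by simp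
  ultimately show thesis
    using edge_face_disc_in_annulus[OF assms(2-6), where \<delta> = "\<sigma> v / 2"] that assms(7) by (metis half_gt_zero less_imp_le)
qed

section \<open>The modulus bound\<close>

lemma emeasure_annulus:
  assumes "0 \<le> r1" "r1 \<le> r2"
  shows "emeasure lborel (cball (0::complex) r2 - ball 0 r1) = ennreal (pi * (r2\<^sup>2 - r1\<^sup>2))"
proof -
  have "emeasure lborel (cball (0::complex) r2 - ball 0 r1)
      = emeasure lborel (cball (0::complex) r2) - emeasure lborel (ball (0::complex) r1)"
    using assms by (intro emeasure_Diff) (auto simp: emeasure_ball)
  also have "\<dots> = ennreal (pi * r2\<^sup>2) - ennreal (pi * r1\<^sup>2)"
    using assms by (simp add: emeasure_cball emeasure_ball unit_ball_vol_2)
  also have "\<dots> = ennreal (pi * (r2\<^sup>2 - r1\<^sup>2))"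
    using assms by (subst ennreal_minus) (auto simp: algebra_simps intro!: mult_left_mono power_mono)
  finally show ?thesis .
qed

lemma max_jump_discs:
  fixes p :: "nat \<Rightarrow> complex" and E :: "nat set set" and r1 r2 :: real
  defines "\<sigma> \<equiv> max_jump E (\<lambda>v. clamp r1 r2 (norm (p v)))"
  assumes gh: "geodesic_homeomorphism V E F p" and fat: "fat_faces F p k" "0 \<le> k" "k < 1" "r1 \<le> r2"
  obtains z :: "nat \<Rightarrow> complex"
  where "\<And>v. ball (z v) (sqrt (1 - k\<^sup>2) * \<sigma> v / 24) \<subseteq> cball 0 r2 - ball 0 r1"
    "\<And>W x. finite W \<Longrightarrow> card {v \<in> W. x \<in> ball (z v) (sqrt (1 - k\<^sup>2) * \<sigma> v / 24)} \<le> 3"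
proof -
  define B where "B z v = ball z (sqrt (1 - k\<^sup>2) * \<sigma> v / 24)" for z :: complex and v
  have "\<exists>f z. 0 < \<sigma> v \<longrightarrow>
      f \<in> F \<and> v \<in> f \<and> B z v \<subseteq> interior (geo_triangle p f) \<inter> (cball 0 r2 - ball 0 r1)" for v
    using max_jump_disc_in_annulus[OF gh fat, of v] unfolding \<sigma>_def B_def by metis
  then obtain face z where disc: "\<And>v. 0 < \<sigma> v \<Longrightarrow>
      face v \<in> F \<and> v \<in> face v \<and> B (z v) v \<subseteq> interior (geo_triangle p (face v)) \<inter> (cball 0 r2 - ball 0 r1)"
    by metis
  have "0 \<le> \<sigma> v" for v
    using max_jump_nonneg[of "\<lambda>v. clamp r1 r2 (norm (p v))" r1 r2] \<open>r1 \<le> r2\<close>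
    unfolding \<sigma>_def by (simp add: clamp_real)
  have "0 < \<sigma> v" if "x \<in> B (z v) v" for x v
    using that \<open>0 \<le> \<sigma> v\<close> unfolding B_def by (cases "\<sigma> v = 0") auto
  show thesis
  proof (rule that[of z, folded B_def])
    show "B (z v) v \<subseteq> cball 0 r2 - ball 0 r1" for v
      using disc \<open>\<And>x v. x \<in> B (z v) v \<Longrightarrow> 0 < \<sigma> v\<close> by blast
    show "card {v \<in> W. x \<in> B (z v) v} \<le> 3" if "finite W" for W x
      using disc \<open>\<And>x v. x \<in> B (z v) v \<Longrightarrow> 0 < \<sigma> v\<close>
      by (intro card_face_interior_overlap_le_3[OF gh that]) blast
  qed
qed

text \<open>The disc at v has area \<pi> (1 - k^2) \<sigma>(v)^2 / 576 and the discs cover the annulus at most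
  three times; this is where the constant 3 * 576 = 1728 comes from.\<close>

lemma sum_max_jump_sq_le:
  fixes p :: "nat \<Rightarrow> complex" and E :: "nat set set" and r1 r2 :: real
  defines "\<sigma> \<equiv> max_jump E (\<lambda>v. clamp r1 r2 (norm (p v)))"
  assumes "geodesic_homeomorphism V E F p" "fat_faces F p k" "0 \<le> k" "k < 1" "0 \<le> r1" "r1 \<le> r2"
    and "finite W"
  shows "(\<Sum>v\<in>W. (\<sigma> v)\<^sup>2) \<le> 1728 / (1 - k\<^sup>2) * (r2\<^sup>2 - r1\<^sup>2)"
proof -
  define s where "s = sqrt (1 - k\<^sup>2)"
  have "0 < s" "s\<^sup>2 = 1 - k\<^sup>2" using assms(4,5) by (simp_all add: s_def power_le_one power_less_one_iff)
  obtain z :: "nat \<Rightarrow> complex" where sub: "\<And>v. ball (z v) (s * \<sigma> v / 24) \<subseteq> cball 0 r2 - ball 0 r1"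
    and overlap: "\<And>W x. finite W \<Longrightarrow> card {v \<in> W. x \<in> ball (z v) (s * \<sigma> v / 24)} \<le> 3"
    using max_jump_discs[OF assms(2-5,7), folded \<sigma>_def s_def] by blast
  have "0 \<le> \<sigma> v" for v
    using max_jump_nonneg[of "\<lambda>v. clamp r1 r2 (norm (p v))" r1 r2] \<open>r1 \<le> r2\<close>
    unfolding \<sigma>_def by (simp add: clamp_real)
  have "(\<Sum>v\<in>W. emeasure lborel (ball (z v) (s * \<sigma> v / 24))) \<le> of_nat 3 * emeasure lborel (cball (0::complex) r2 - ball 0 r1)"
    using sub overlap \<open>finite W\<close> by (intro sum_emeasure_le_bounded_overlap) auto
  then have "ennreal (\<Sum>v\<in>W. pi * (s * \<sigma> v / 24)\<^sup>2) \<le> ennreal (3 * (pi * (r2\<^sup>2 - r1\<^sup>2)))"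
    using \<open>0 < s\<close> \<open>\<And>v. 0 \<le> \<sigma> v\<close> assms(6,7)
    by (simp add: emeasure_ball unit_ball_vol_2 emeasure_annulus ennreal_mult sum_ennreal[symmetric])
  then have "(\<Sum>v\<in>W. pi * (s * \<sigma> v / 24)\<^sup>2) \<le> 3 * (pi * (r2\<^sup>2 - r1\<^sup>2))"
    using assms(6,7) by (simp add: ennreal_le_iff power_mono)
  moreover have "(\<Sum>v\<in>W. pi * (s * \<sigma> v / 24)\<^sup>2) = pi * (s\<^sup>2 * (\<Sum>v\<in>W. (\<sigma> v)\<^sup>2)) / 576"
    by (simp add: sum_distrib_left sum_divide_distrib power_mult_distrib power_divide mult.assoc)
  ultimately have "pi * (s\<^sup>2 * (\<Sum>v\<in>W. (\<sigma> v)\<^sup>2)) \<le> pi * (1728 * (r2\<^sup>2 - r1\<^sup>2))"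
    by simp
  then have "s\<^sup>2 * (\<Sum>v\<in>W. (\<sigma> v)\<^sup>2) \<le> 1728 * (r2\<^sup>2 - r1\<^sup>2)"
    by simp
  then show ?thesis
    using \<open>0 < s\<close> unfolding \<open>s\<^sup>2 = 1 - k\<^sup>2\<close>[symmetric] by (simp add: field_simps mult.commute)
qed

lemma vmod_le_of_finite_sums:
  assumes "admissible V E V1 V2 \<eta>" "\<And>W. finite W \<Longrightarrow> W \<subseteq> V \<Longrightarrow> (\<Sum>v\<in>W. ennreal ((\<eta> v)\<^sup>2)) \<le> B"
  shows "vmod V E V1 V2 \<le> B"
proof -
  have "vmod V E V1 V2 \<le> (\<Sum>\<^sub>\<infinity> v\<in>V. ennreal ((\<eta> v)\<^sup>2))"
    unfolding vmod_def using assms(1) by (intro INF_lower) simp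
  also have "\<dots> = (SUP W\<in>{W. finite W \<and> W \<subseteq> V}. \<Sum>v\<in>W. ennreal ((\<eta> v)\<^sup>2))"
    by (rule nonneg_infsum_complete) simp
  also have "\<dots> \<le> B" using assms(2) by (intro SUP_least) auto
  finally show ?thesis .
qed

lemma vmod_le_annulus:
  assumes gh: "geodesic_homeomorphism V E F p" and fat: "fat_faces F p k" "0 \<le> k" "k < 1"
    and r: "0 < r1" "r1 < r2" and "p ` V1 \<subseteq> ball 0 r1" "p ` V2 \<subseteq> - ball 0 r2"
  shows "vmod V E V1 V2 \<le> ennreal (1728 / (1 - k\<^sup>2) * ((r2 + r1) / (r2 - r1)))"
proof -
  define g where "g v = clamp r1 r2 (norm (p v))" for v
  have g_range: "g v \<in> {r1..r2}" for v using r by (simp add: g_def clamp_real)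
  have "admissible V E V1 V2 (\<lambda>v. max_jump E g v / (r2 - r1))"
    using assms(7,8) r by (intro admissible_max_jump[OF g_range]) (force simp: g_def clamp_real)+
  moreover have "(\<Sum>v\<in>W. ennreal ((max_jump E g v / (r2 - r1))\<^sup>2))
      \<le> ennreal (1728 / (1 - k\<^sup>2) * ((r2 + r1) / (r2 - r1)))" if "finite W" for W
  proof -
    have "(\<Sum>v\<in>W. (max_jump E g v / (r2 - r1))\<^sup>2) = (\<Sum>v\<in>W. (max_jump E g v)\<^sup>2) / (r2 - r1)\<^sup>2"
      by (simp add: power_divide sum_divide_distrib)
    also have "\<dots> \<le> 1728 / (1 - k\<^sup>2) * (r2\<^sup>2 - r1\<^sup>2) / (r2 - r1)\<^sup>2"
      using sum_max_jump_sq_le[OF gh fat _ _ that] r unfolding g_def by (intro divide_right_mono) auto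
    also have "\<dots> = 1728 / (1 - k\<^sup>2) * ((r2\<^sup>2 - r1\<^sup>2) / (r2 - r1)\<^sup>2)" by simp
    also have "(r2\<^sup>2 - r1\<^sup>2) / (r2 - r1)\<^sup>2 = (r2 + r1) / (r2 - r1)"
      using r by (simp add: power2_eq_square square_diff_square_factored)
    finally show ?thesis by (simp add: sum_ennreal ennreal_leI)
  qed
  ultimately show ?thesis by (rule vmod_le_of_finite_sums)
qed

lemma ennreal_le_one_divide:
  fixes x :: ennreal
  assumes "0 < c" "x \<le> ennreal (1 / c)"
  shows "ennreal c \<le> 1 / x"
proof (cases "x = 0")
  case False
  obtain y where y: "x = ennreal y" "0 < y" "y \<le> 1 / c"
    using assms(2) False by (cases x) (auto simp: top_unique ennreal_le_iff2)
  then have "c \<le> 1 / y" using assms(1) by (simp add: le_divide_eq mult.commute)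
  moreover have "1 / x = ennreal (1 / y)" using y by (simp flip: divide_ennreal)
  ultimately show ?thesis by (simp add: ennreal_leI)
qed simp

lemma annulus_ratio_le:
  fixes r1 r2 :: real
  assumes "0 < r1" "r1 < r2"
  shows "(r2 + r1) / (r2 - r1) \<le> 4 / (1 - (r1 / r2)\<^sup>2)"
proof -
  have "(r2 + r1) / (r2 - r1) = (r2 + r1)\<^sup>2 / ((r2 - r1) * (r2 + r1))"
    using assms by (simp add: power2_eq_square)
  also have "\<dots> \<le> (2 * r2)\<^sup>2 / ((r2 - r1) * (r2 + r1))"
    using assms by (intro divide_right_mono power_mono) auto
  also have "\<dots> = 4 / (1 - (r1 / r2)\<^sup>2)"
    using assms by (simp add: field_simps power2_eq_square)
  finally show ?thesis .
qed

lemma VEL_ge_annulus: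
  assumes "geodesic_homeomorphism V E F p" "fat_faces F p k" "0 \<le> k" "k < 1"
    and "0 < r1" "r1 < r2" "p ` V1 \<subseteq> ball 0 r1" "p ` V2 \<subseteq> - ball 0 r2"
  shows "ennreal ((1 - k\<^sup>2) / 6912 * (1 - (r1 / r2)\<^sup>2)) \<le> VEL V E V1 V2"
proof -
  define K where "K = 1 - k\<^sup>2"
  define Q where "Q = 1 - (r1 / r2)\<^sup>2"
  have "0 < K" "0 < Q"
    using assms(3-6) by (simp_all add: K_def Q_def power_less_one_iff)
  have "1728 / K * ((r2 + r1) / (r2 - r1)) \<le> 1728 / K * (4 / Q)"
    using annulus_ratio_le[OF assms(5,6)] \<open>0 < K\<close> unfolding Q_def by (intro mult_left_mono) simp_all
  also have "\<dots> = 1 / (K / 6912 * Q)"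
    using \<open>0 < K\<close> \<open>0 < Q\<close> by (simp add: field_simps)
  finally have "vmod V E V1 V2 \<le> ennreal (1 / (K / 6912 * Q))"
    using vmod_le_annulus[OF assms] unfolding K_def by (metis ennreal_leI order_trans)
  then show ?thesis
    unfolding VEL_def K_def[symmetric] Q_def[symmetric]
    using \<open>0 < K\<close> \<open>0 < Q\<close> by (intro ennreal_le_one_divide) simp_all
qed

theorem lemma3p4:
  fixes \<epsilon> :: real
  assumes "\<epsilon> > 0"
  shows "\<exists>C>0. \<forall>V E F p r1 r2 V1 V2.
     geodesic_homeomorphism V E F p \<and> uniformly_nondegenerate F p \<epsilon> \<and>
     0 < r1 \<and> r1 < r2 \<and>
     V1 \<subseteq> V \<and> V2 \<subseteq> V \<and> V1 \<noteq> {} \<and> V2 \<noteq> {} \<and> V1 \<inter> V2 = {} \<and>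
     p ` V1 \<subseteq> ball 0 r1 \<and> p ` V2 \<subseteq> - ball 0 r2 \<and>
     (\<forall>i\<in>V1. star_image F p i \<subseteq> ball 0 r2)
     \<longrightarrow> VEL V E V1 V2 \<ge> ennreal (C * (1 - (r1 / r2)\<^sup>2)) \<and>
         (r2 \<ge> 2 * r1 \<longrightarrow> VEL V E V1 V2 \<ge> ennreal (3 / 4 * C))"
proof -
  define k where "k = cos (min \<epsilon> 1)"
  have k: "0 \<le> k" "k < 1" using cos_min_one_bounds[OF assms] by (simp_all add: k_def)
  define C where "C = (1 - k\<^sup>2) / 6912"
  have "0 < C" using k by (simp add: C_def power_less_one_iff)
  have VEL: "ennreal (C * (1 - (r1 / r2)\<^sup>2)) \<le> VEL V E V1 V2"
    if "geodesic_homeomorphism V E F p" "uniformly_nondegenerate F p \<epsilon>" "0 < r1" "r1 < r2"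
      "p ` V1 \<subseteq> ball 0 r1" "p ` V2 \<subseteq> - ball 0 r2" for V E F p r1 r2 V1 V2
    using VEL_ge_annulus[OF that(1) uniformly_nondegenerate_fat_faces[OF that(1,2)] _ _ that(3-6)]
      assms k unfolding C_def k_def by simp
  have quarter: "ennreal (3 / 4 * C) \<le> ennreal (C * (1 - (r1 / r2)\<^sup>2))"
    if "0 < r1" "2 * r1 \<le> r2" for r1 r2 :: real
  proof -
    have "(r1 / r2)\<^sup>2 \<le> (1 / 2)\<^sup>2" using that by (intro power_mono) (auto simp: divide_le_eq)
    then show ?thesis using \<open>0 < C\<close> by (intro ennreal_leI) (simp add: power2_eq_square)
  qed
  show ?thesis
    using \<open>0 < C\<close> VEL order_trans[OF quarter VEL] by (intro exI[of _ C]) auto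
qed

end
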